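(* Let $\mathcal{M}$ be a model category with localization functor $h:\mathcal{M}\to\mathbf{Ho}(\mathcal{M})$. If two diagrams $F:\underline{I}\to\mathcal{M}$ and $G:\underline{J}\to\mathcal{M}$ (objects of $\mathrm{diag}(\mathcal{M})$) are related by a span $F\leftarrow H\rightarrow G$ in $\mathrm{diag}(\mathcal{M})$ of maps which are open up to homotopy, then $F$ and $G$ are bisimilar up to homotopy.
   Context: For a category $\mathcal{K}$, $\mathrm{diag}(\mathcal{K})$ has as objects functors $F:\underline{I}\to\mathcal{K}$ from small categories; a morphism from $F:\underline{I}_1\to\mathcal{K}$ to $G:\underline{I}_2\to\mathcal{K}$ is a pair $(f,\mu)$ with $f:\underline{I}_1\to\underline{I}_2$ a functor and $\mu:F\Rightarrow G\circ f$ a natural transformation; composition $(g,\nu)(f,\mu)=(gf,(\nu f)\odot\mu)$. A morphism $(f,\mu):F\to G$ is open if $f$ is surjective on objects, every morphism $f(i)\to j'$ of $\underline{I}_2$ is the image $f(\phi)$ of some morphism $\phi:i\to j$ of $\underline{I}_1$, and $\mu$ is a natural isomorphism. Two objects $F:\underline{I}\to\mathcal{K}$, $G:\underline{J}\to\mathcal{K}$ are bisimilar if there is a set $\mathcal{R}$ of triples $(i,\eta,j)$, $i\in\underline{I}$, $j\in\underline{J}$, $\eta:F(i)\cong G(j)$ an isomorphism, such that every object of $\underline{I}$ and every object of $\underline{J}$ occurs in some triple; for every $(i,\eta,j)\in\mathcal{R}$ and $\phi:i\to i'$ there are $(i',\eta',j')\in\mathcal{R}$ and $\psi:j\to j'$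 with $\eta'F(\phi)=G(\psi)\eta$; and symmetrically for every $(i,\eta,j)\in\mathcal{R}$ and $\psi:j\to j'$ there are $(i',\eta',j')\in\mathcal{R}$ and $\phi:i\to i'$ with $\eta'F(\phi)=G(\psi)\eta$. A morphism $(f,\mu):F\to G$ of $\mathrm{diag}(\mathcal{M})$ is open up to homotopy if $(f,h\mu):h\circ F\to h\circ G$ is open in $\mathrm{diag}(\mathbf{Ho}(\mathcal{M}))$; $F,G$ are bisimilar up to homotopy if $h\circ F$ and $h\circ G$ are bisimilar. *)

theory Defs
  imports Main
begin

text \<open>A category with object type 'o and arrow type 'a. cmp g f is g after f,
  defined when cd f = dm g.\<close>
record ('o,'a) cat =
  ob  :: "'o set"
  ar  :: "'a set"
  dm  :: "'a \<Rightarrow> 'o"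
  cd  :: "'a \<Rightarrow> 'o"
  idn :: "'o \<Rightarrow> 'a"
  cmp :: "'a \<Rightarrow> 'a \<Rightarrow> 'a"

definition is_category :: "('o,'a) cat \<Rightarrow> bool" where
  "is_category C \<longleftrightarrow>
     (\<forall>f\<in>ar C. dm C f \<in> ob C \<and> cd C f \<in> ob C) \<and>
     (\<forall>x\<in>ob C. idn C x \<in> ar C \<and> dm C (idn C x) = x \<and> cd C (idn C x) = x) \<and>
     (\<forall>f\<in>ar C. \<forall>g\<in>ar C. cd C f = dm C g \<longrightarrow>
        cmp C g f \<in> ar C \<and> dm C (cmp C g f) = dm C f \<and> cd C (cmp C g f) = cd C g) \<and>
     (\<forall>f\<in>ar C. cmp C f (idn C (dm C f)) = f \<and> cmp C (idn C (cd C f)) f = f) \<and>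
     (\<forall>f\<in>ar C. \<forall>g\<in>ar C. \<forall>k\<in>ar C. cd C f = dm C g \<longrightarrow> cd C g = dm C k \<longrightarrow>
        cmp C k (cmp C g f) = cmp C (cmp C k g) f)"

definition hom_arr :: "('o,'a) cat \<Rightarrow> 'a \<Rightarrow> 'o \<Rightarrow> 'o \<Rightarrow> bool" where
  "hom_arr C f x y \<longleftrightarrow> f \<in> ar C \<and> dm C f = x \<and> cd C f = y"

definition is_iso :: "('o,'a) cat \<Rightarrow> 'a \<Rightarrow> bool" where
  "is_iso C f \<longleftrightarrow> f \<in> ar C \<and>
     (\<exists>g. hom_arr C g (cd C f) (dm C f) \<and>
          cmp C g f = idn C (dm C f) \<and> cmp C f g = idn C (cd C f))"

record ('o1,'a1,'o2,'a2) ftor =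
  fo :: "'o1 \<Rightarrow> 'o2"
  fa :: "'a1 \<Rightarrow> 'a2"

definition is_functor :: "('o1,'a1) cat \<Rightarrow> ('o2,'a2) cat \<Rightarrow> ('o1,'a1,'o2,'a2) ftor \<Rightarrow> bool" where
  "is_functor C D F \<longleftrightarrow> is_category C \<and> is_category D \<and>
     (\<forall>x\<in>ob C. fo F x \<in> ob D) \<and>
     (\<forall>f\<in>ar C. hom_arr D (fa F f) (fo F (dm C f)) (fo F (cd C f))) \<and>
     (\<forall>x\<in>ob C. fa F (idn C x) = idn D (fo F x)) \<and>
     (\<forall>f\<in>ar C. \<forall>g\<in>ar C. cd C f = dm C g \<longrightarrow> fa F (cmp C g f) = cmp D (fa F g) (fa F f))"

definition fcomp :: "('o2,'a2,'o3,'a3) ftor \<Rightarrow> ('o1,'a1,'o2,'a2) ftor \<Rightarrow> ('o1,'a1,'o3,'a3) ftor" where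
  "fcomp G F = \<lparr>fo = fo G \<circ> fo F, fa = fa G \<circ> fa F\<rparr>"

definition feq :: "('o1,'a1) cat \<Rightarrow> ('o1,'a1,'o2,'a2) ftor \<Rightarrow> ('o1,'a1,'o2,'a2) ftor \<Rightarrow> bool" where
  "feq C F G \<longleftrightarrow> (\<forall>x\<in>ob C. fo F x = fo G x) \<and> (\<forall>f\<in>ar C. fa F f = fa G f)"

definition is_nat_trans :: "('o1,'a1) cat \<Rightarrow> ('o2,'a2) cat \<Rightarrow> ('o1,'a1,'o2,'a2) ftor
     \<Rightarrow> ('o1,'a1,'o2,'a2) ftor \<Rightarrow> ('o1 \<Rightarrow> 'a2) \<Rightarrow> bool" where
  "is_nat_trans C D F G mu \<longleftrightarrow> is_functor C D F \<and> is_functor C D G \<and>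
     (\<forall>x\<in>ob C. hom_arr D (mu x) (fo F x) (fo G x)) \<and>
     (\<forall>f\<in>ar C. cmp D (mu (cd C f)) (fa F f) = cmp D (fa G f) (mu (dm C f)))"

definition is_nat_iso :: "('o1,'a1) cat \<Rightarrow> ('o2,'a2) cat \<Rightarrow> ('o1,'a1,'o2,'a2) ftor
     \<Rightarrow> ('o1,'a1,'o2,'a2) ftor \<Rightarrow> ('o1 \<Rightarrow> 'a2) \<Rightarrow> bool" where
  "is_nat_iso C D F G mu \<longleftrightarrow> is_nat_trans C D F G mu \<and> (\<forall>x\<in>ob C. is_iso D (mu x))"

definition has_terminal :: "('o,'a) cat \<Rightarrow> bool" where
  "has_terminal C \<longleftrightarrow> (\<exists>t\<in>ob C. \<forall>x\<in>ob C. \<exists>!f. hom_arr C f x t)"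

definition has_initial :: "('o,'a) cat \<Rightarrow> bool" where
  "has_initial C \<longleftrightarrow> (\<exists>t\<in>ob C. \<forall>x\<in>ob C. \<exists>!f. hom_arr C f t x)"

definition has_pullbacks :: "('o,'a) cat \<Rightarrow> bool" where
  "has_pullbacks C \<longleftrightarrow>
     (\<forall>f\<in>ar C. \<forall>g\<in>ar C. cd C f = cd C g \<longrightarrow>
       (\<exists>P p1 p2. hom_arr C p1 P (dm C f) \<and> hom_arr C p2 P (dm C g) \<and>
          cmp C f p1 = cmp C g p2 \<and>
          (\<forall>Q q1 q2. hom_arr C q1 Q (dm C f) \<and> hom_arr C q2 Q (dm C g) \<and>
               cmp C f q1 = cmp C g q2 \<longrightarrow>
             (\<exists>!u. hom_arr C u Q P \<and> cmp C p1 u = q1 \<and> cmp C p2 u = q2))))"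

definition has_pushouts :: "('o,'a) cat \<Rightarrow> bool" where
  "has_pushouts C \<longleftrightarrow>
     (\<forall>f\<in>ar C. \<forall>g\<in>ar C. dm C f = dm C g \<longrightarrow>
       (\<exists>P p1 p2. hom_arr C p1 (cd C f) P \<and> hom_arr C p2 (cd C g) P \<and>
          cmp C p1 f = cmp C p2 g \<and>
          (\<forall>Q q1 q2. hom_arr C q1 (cd C f) Q \<and> hom_arr C q2 (cd C g) Q \<and>
               cmp C q1 f = cmp C q2 g \<longrightarrow>
             (\<exists>!u. hom_arr C u P Q \<and> cmp C u p1 = q1 \<and> cmp C u p2 = q2))))"

definition is_retract :: "('o,'a) cat \<Rightarrow> 'a \<Rightarrow> 'a \<Rightarrow> bool" where
  "is_retract C f g \<longleftrightarrow> f \<in> ar C \<and> g \<in> ar C \<and>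
     (\<exists>i r i' r'. hom_arr C i (dm C f) (dm C g) \<and> hom_arr C r (dm C g) (dm C f) \<and>
        hom_arr C i' (cd C f) (cd C g) \<and> hom_arr C r' (cd C g) (cd C f) \<and>
        cmp C r i = idn C (dm C f) \<and> cmp C r' i' = idn C (cd C f) \<and>
        cmp C g i = cmp C i' f \<and> cmp C f r = cmp C r' g)"

definition llp :: "('o,'a) cat \<Rightarrow> 'a \<Rightarrow> 'a \<Rightarrow> bool" where
  "llp C i p \<longleftrightarrow>
     (\<forall>u v. hom_arr C u (dm C i) (dm C p) \<and> hom_arr C v (cd C i) (cd C p) \<and>
            cmp C p u = cmp C v i \<longrightarrow>
        (\<exists>l. hom_arr C l (cd C i) (dm C p) \<and> cmp C l i = u \<and> cmp C p l = v))"

definition arrow_class :: "('o,'a) cat \<Rightarrow> 'a set \<Rightarrow> bool" where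
  "arrow_class C S \<longleftrightarrow> S \<subseteq> ar C \<and> (\<forall>x\<in>ob C. idn C x \<in> S) \<and>
     (\<forall>f\<in>S. \<forall>g\<in>S. cd C f = dm C g \<longrightarrow> cmp C g f \<in> S) \<and>
     (\<forall>f\<in>ar C. \<forall>g\<in>S. is_retract C f g \<longrightarrow> f \<in> S)"

definition model_category :: "('o,'a) cat \<Rightarrow> 'a set \<Rightarrow> 'a set \<Rightarrow> 'a set \<Rightarrow> bool" where
  "model_category C W Fib Cof \<longleftrightarrow> is_category C \<and>
     has_terminal C \<and> has_pullbacks C \<and> has_initial C \<and> has_pushouts C \<and>
     arrow_class C W \<and> arrow_class C Fib \<and> arrow_class C Cof \<and>
     (\<forall>f\<in>ar C. \<forall>g\<in>ar C. cd C f = dm C g \<longrightarrow>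
        ((f \<in> W \<and> g \<in> W \<longrightarrow> cmp C g f \<in> W) \<and>
         (f \<in> W \<and> cmp C g f \<in> W \<longrightarrow> g \<in> W) \<and>
         (g \<in> W \<and> cmp C g f \<in> W \<longrightarrow> f \<in> W))) \<and>
     (\<forall>i\<in>Cof. \<forall>p\<in>Fib \<inter> W. llp C i p) \<and>
     (\<forall>i\<in>Cof \<inter> W. \<forall>p\<in>Fib. llp C i p) \<and>
     (\<forall>f\<in>ar C. \<exists>i p. i \<in> Cof \<inter> W \<and> p \<in> Fib \<and> cd C i = dm C p \<and> cmp C p i = f) \<and>
     (\<forall>f\<in>ar C. \<exists>i p. i \<in> Cof \<and> p \<in> Fib \<inter> W \<and> cd C i = dm C p \<and> cmp C p i = f)"

text \<open>h : M \<rightarrow> Ho is a localization of M at W: it inverts W and is universal among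
  W-inverting functors (into categories of the same object/arrow types as Ho).\<close>
definition inverts :: "('o,'a) cat \<Rightarrow> 'a set \<Rightarrow> ('o2,'a2) cat \<Rightarrow> ('o,'a,'o2,'a2) ftor \<Rightarrow> bool" where
  "inverts M W D F \<longleftrightarrow> is_functor M D F \<and> (\<forall>w\<in>W. is_iso D (fa F w))"

definition is_localization :: "('o,'a) cat \<Rightarrow> 'a set \<Rightarrow> ('ho,'ha) cat \<Rightarrow> ('o,'a,'ho,'ha) ftor \<Rightarrow> bool" where
  "is_localization M W Ho h \<longleftrightarrow> inverts M W Ho h \<and>
     (\<forall>(D :: ('ho,'ha) cat) F. inverts M W D F \<longrightarrow>
        (\<exists>G. is_functor Ho D G \<and> feq M (fcomp G h) F \<and>
             (\<forall>G'. is_functor Ho D G' \<and> feq M (fcomp G' h) F \<longrightarrow> feq Ho G' G)))"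

text \<open>A diagram F : I \<rightarrow> K (I a small category: all HOL sets are small).\<close>
definition is_diagram :: "('i,'ia) cat \<Rightarrow> ('o,'a) cat \<Rightarrow> ('i,'ia,'o,'a) ftor \<Rightarrow> bool" where
  "is_diagram I K F \<longleftrightarrow> is_functor I K F"

definition diag_morphism :: "('o,'a) cat \<Rightarrow> ('i1,'ia1) cat \<Rightarrow> ('i1,'ia1,'o,'a) ftor
     \<Rightarrow> ('i2,'ia2) cat \<Rightarrow> ('i2,'ia2,'o,'a) ftor
     \<Rightarrow> ('i1,'ia1,'i2,'ia2) ftor \<Rightarrow> ('i1 \<Rightarrow> 'a) \<Rightarrow> bool" where
  "diag_morphism K I1 F I2 G f mu \<longleftrightarrow>
     is_diagram I1 K F \<and> is_diagram I2 K G \<and> is_functor I1 I2 f \<and>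
     is_nat_trans I1 K F (fcomp G f) mu"

definition diag_open :: "('o,'a) cat \<Rightarrow> ('i1,'ia1) cat \<Rightarrow> ('i1,'ia1,'o,'a) ftor
     \<Rightarrow> ('i2,'ia2) cat \<Rightarrow> ('i2,'ia2,'o,'a) ftor
     \<Rightarrow> ('i1,'ia1,'i2,'ia2) ftor \<Rightarrow> ('i1 \<Rightarrow> 'a) \<Rightarrow> bool" where
  "diag_open K I1 F I2 G f mu \<longleftrightarrow>
     diag_morphism K I1 F I2 G f mu \<and>
     fo f ` ob I1 = ob I2 \<and>
     (\<forall>i\<in>ob I1. \<forall>b\<in>ar I2. dm I2 b = fo f i \<longrightarrow>
        (\<exists>\<phi>\<in>ar I1. dm I1 \<phi> = i \<and> fa f \<phi> = b)) \<and>
     is_nat_iso I1 K F (fcomp G f) mu"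

definition bisimilar :: "('o,'a) cat \<Rightarrow> ('i,'ia) cat \<Rightarrow> ('i,'ia,'o,'a) ftor
     \<Rightarrow> ('j,'ja) cat \<Rightarrow> ('j,'ja,'o,'a) ftor \<Rightarrow> bool" where
  "bisimilar K I F J G \<longleftrightarrow>
     (\<exists>R :: ('i \<times> 'a \<times> 'j) set.
        (\<forall>(i,\<eta>,j)\<in>R. i \<in> ob I \<and> j \<in> ob J \<and> hom_arr K \<eta> (fo F i) (fo G j) \<and> is_iso K \<eta>) \<and>
        (\<forall>i\<in>ob I. \<exists>\<eta> j. (i,\<eta>,j) \<in> R) \<and>
        (\<forall>j\<in>ob J. \<exists>i \<eta>. (i,\<eta>,j) \<in> R) \<and>
        (\<forall>(i,\<eta>,j)\<in>R. \<forall>\<phi>\<in>ar I. dm I \<phi> = i \<longrightarrow>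
           (\<exists>\<eta>' j' \<psi>. (cd I \<phi>, \<eta>', j') \<in> R \<and> hom_arr J \<psi> j j' \<and>
               cmp K \<eta>' (fa F \<phi>) = cmp K (fa G \<psi>) \<eta>)) \<and>
        (\<forall>(i,\<eta>,j)\<in>R. \<forall>\<psi>\<in>ar J. dm J \<psi> = j \<longrightarrow>
           (\<exists>i' \<eta>' \<phi>. (i', \<eta>', cd J \<psi>) \<in> R \<and> hom_arr I \<phi> i i' \<and>
               cmp K \<eta>' (fa F \<phi>) = cmp K (fa G \<psi>) \<eta>)))"

definition open_up_to_htpy :: "('o,'a) cat \<Rightarrow> ('ho,'ha) cat \<Rightarrow> ('o,'a,'ho,'ha) ftor
     \<Rightarrow> ('i1,'ia1) cat \<Rightarrow> ('i1,'ia1,'o,'a) ftor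
     \<Rightarrow> ('i2,'ia2) cat \<Rightarrow> ('i2,'ia2,'o,'a) ftor
     \<Rightarrow> ('i1,'ia1,'i2,'ia2) ftor \<Rightarrow> ('i1 \<Rightarrow> 'a) \<Rightarrow> bool" where
  "open_up_to_htpy M Ho h I1 F I2 G f mu \<longleftrightarrow>
     diag_morphism M I1 F I2 G f mu \<and>
     diag_open Ho I1 (fcomp h F) I2 (fcomp h G) f (\<lambda>i. fa h (mu i))"

definition bisimilar_up_to_htpy :: "('o,'a) cat \<Rightarrow> ('ho,'ha) cat \<Rightarrow> ('o,'a,'ho,'ha) ftor
     \<Rightarrow> ('i,'ia) cat \<Rightarrow> ('i,'ia,'o,'a) ftor \<Rightarrow> ('j,'ja) cat \<Rightarrow> ('j,'ja,'o,'a) ftor \<Rightarrow> bool" where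
  "bisimilar_up_to_htpy M Ho h I F J G \<longleftrightarrow> bisimilar Ho I (fcomp h F) J (fcomp h G)"

end

theory Submission imports Defs begin

text \<open>Openness up to homotopy is openness in Ho(M). If
  (f, \<alpha>) : H \<rightarrow> F and (g, \<beta>) : H \<rightarrow> G are open, then \<theta> = \<beta> \<alpha>\<inverse> is a natural isomorphism
  F f \<cong> G g, and the triples (f l, \<theta> l, g l) form a bisimulation: an arrow of I (or J) out of
  f l (or g l) lifts to an arrow \<phi> of L out of l, and naturality of \<theta> at \<phi> is exactly the
  required square.\<close>

definition inv_arr :: "('o,'a) cat \<Rightarrow> 'a \<Rightarrow> 'a" where
  "inv_arr C a = (SOME g. hom_arr C g (cd C a) (dm C a) \<and>
     cmp C g a = idn C (dm C a) \<and> cmp C a g = idn C (cd C a))"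

lemma inv_arr:
  assumes "is_iso C a" and "hom_arr C a x y"
  shows "hom_arr C (inv_arr C a) y x" and "cmp C (inv_arr C a) a = idn C x"
    and "cmp C a (inv_arr C a) = idn C y"
  using someI_ex[OF assms(1)[unfolded is_iso_def, THEN conjunct2]] assms(2)
  unfolding inv_arr_def hom_arr_def by auto

lemma iso_hom_arrI:
  assumes "hom_arr C a x y" and "hom_arr C b y x"
    and "cmp C b a = idn C x" and "cmp C a b = idn C y"
  shows "is_iso C a"
  using assms unfolding is_iso_def hom_arr_def by metis

lemma hom_arr_cmp:
  "is_category C \<Longrightarrow> hom_arr C f x y \<Longrightarrow> hom_arr C g y z \<Longrightarrow> hom_arr C (cmp C g f) x z"
  unfolding is_category_def hom_arr_def by metis

lemma cmp_assoc:
  "is_category C \<Longrightarrow> hom_arr C f x y \<Longrightarrow> hom_arr C g y z \<Longrightarrow> hom_arr C k z w \<Longrightarrow>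
   cmp C (cmp C k g) f = cmp C k (cmp C g f)"
  unfolding is_category_def hom_arr_def by metis

lemma cmp_idn_left: "is_category C \<Longrightarrow> hom_arr C f x y \<Longrightarrow> cmp C (idn C y) f = f"
  unfolding is_category_def hom_arr_def by metis

lemma cmp_idn_right: "is_category C \<Longrightarrow> hom_arr C f x y \<Longrightarrow> cmp C f (idn C x) = f"
  unfolding is_category_def hom_arr_def by metis

lemma is_iso_inv_arr:
  assumes "is_iso C a" and "hom_arr C a x y"
  shows "is_iso C (inv_arr C a)"
  using iso_hom_arrI[OF inv_arr(1) assms(2) inv_arr(3,2)] assms by auto

lemma is_iso_cmp:
  assumes C: "is_category C"
    and a: "is_iso C a" "hom_arr C a x y" and b: "is_iso C b" "hom_arr C b y z"
  shows "is_iso C (cmp C b a)"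
proof -
  note a' = inv_arr[OF a] and b' = inv_arr[OF b]
  let ?a' = "inv_arr C a" and ?b' = "inv_arr C b"
  have ba: "hom_arr C (cmp C b a) x z" and ab': "hom_arr C (cmp C ?a' ?b') z x"
    using hom_arr_cmp[OF C a(2) b(2)] hom_arr_cmp[OF C b'(1) a'(1)] .
  have "cmp C (cmp C ?a' ?b') (cmp C b a) = cmp C ?a' (cmp C ?b' (cmp C b a))"
    using cmp_assoc[OF C ba b'(1) a'(1)] .
  also have "cmp C ?b' (cmp C b a) = a"
    using cmp_assoc[OF C a(2) b(2) b'(1)] b'(2) cmp_idn_left[OF C a(2)] by simp
  finally have left: "cmp C (cmp C ?a' ?b') (cmp C b a) = idn C x"
    using a'(2) by simp
  have "cmp C (cmp C b a) (cmp C ?a' ?b') = cmp C b (cmp C a (cmp C ?a' ?b'))"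
    using cmp_assoc[OF C ab' a(2) b(2)] .
  also have "cmp C a (cmp C ?a' ?b') = ?b'"
    using cmp_assoc[OF C b'(1) a'(1) a(2)] a'(3) cmp_idn_left[OF C b'(1)] by simp
  finally have right: "cmp C (cmp C b a) (cmp C ?a' ?b') = idn C z"
    using b'(3) by simp
  show ?thesis
    using iso_hom_arrI[OF ba ab' left right] .
qed

lemma cmp_inv_arr_square:
  assumes C: "is_category C"
    and a: "is_iso C a" "hom_arr C a x y" and a': "is_iso C a'" "hom_arr C a' x' y'"
    and p: "hom_arr C p x x'" and q: "hom_arr C q y y'"
    and square: "cmp C a' p = cmp C q a"
  shows "cmp C (inv_arr C a') q = cmp C p (inv_arr C a)"
proof -
  note ia = inv_arr[OF a] and ia' = inv_arr[OF a']
  have pa: "hom_arr C (cmp C p (inv_arr C a)) y x'"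
    using hom_arr_cmp[OF C ia(1) p] .
  have "q = cmp C (cmp C q a) (inv_arr C a)"
    using cmp_assoc[OF C ia(1) a(2) q] ia(3) cmp_idn_right[OF C q] by simp
  also have "\<dots> = cmp C a' (cmp C p (inv_arr C a))"
    using square cmp_assoc[OF C ia(1) p a'(2)] by simp
  finally have q_eq: "q = cmp C a' (cmp C p (inv_arr C a))" .
  have "cmp C (inv_arr C a') q = cmp C (cmp C (inv_arr C a') a') (cmp C p (inv_arr C a))"
    using q_eq cmp_assoc[OF C pa a'(2) ia'(1)] by simp
  also have "\<dots> = cmp C p (inv_arr C a)"
    using ia'(2) cmp_idn_left[OF C pa] by simp
  finally show ?thesis .
qed

lemma is_nat_iso_inv:
  assumes "is_nat_iso C D S T \<alpha>"
  shows "is_nat_iso C D T S (\<lambda>x. inv_arr D (\<alpha> x))"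
proof -
  have S: "is_functor C D S" and T: "is_functor C D T" and D: "is_category D"
    and \<alpha>: "\<And>x. x \<in> ob C \<Longrightarrow> hom_arr D (\<alpha> x) (fo S x) (fo T x)"
    and \<alpha>_iso: "\<And>x. x \<in> ob C \<Longrightarrow> is_iso D (\<alpha> x)"
    and nat: "\<And>u. u \<in> ar C \<Longrightarrow> cmp D (\<alpha> (cd C u)) (fa S u) = cmp D (fa T u) (\<alpha> (dm C u))"
    using assms unfolding is_nat_iso_def is_nat_trans_def is_functor_def by auto
  have ob: "\<And>u. u \<in> ar C \<Longrightarrow> dm C u \<in> ob C \<and> cd C u \<in> ob C"
    using S unfolding is_functor_def is_category_def by auto
  have "cmp D (inv_arr D (\<alpha> (cd C u))) (fa T u) = cmp D (fa S u) (inv_arr D (\<alpha> (dm C u)))"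
    if u: "u \<in> ar C" for u
  proof (rule cmp_inv_arr_square[OF D])
    show "is_iso D (\<alpha> (dm C u))" "is_iso D (\<alpha> (cd C u))"
      "hom_arr D (\<alpha> (dm C u)) (fo S (dm C u)) (fo T (dm C u))"
      "hom_arr D (\<alpha> (cd C u)) (fo S (cd C u)) (fo T (cd C u))"
      using u ob \<alpha> \<alpha>_iso by auto
    show "hom_arr D (fa S u) (fo S (dm C u)) (fo S (cd C u))"
      "hom_arr D (fa T u) (fo T (dm C u)) (fo T (cd C u))"
      using u S T unfolding is_functor_def by auto
  qed (use u nat in auto)
  moreover have "hom_arr D (inv_arr D (\<alpha> x)) (fo T x) (fo S x)" if "x \<in> ob C" for x
    using inv_arr(1)[OF \<alpha>_iso[OF that] \<alpha>[OF that]] .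
  moreover have "is_iso D (inv_arr D (\<alpha> x))" if "x \<in> ob C" for x
    using is_iso_inv_arr[OF \<alpha>_iso[OF that] \<alpha>[OF that]] .
  ultimately show ?thesis
    using S T unfolding is_nat_iso_def is_nat_trans_def by simp
qed

lemma is_nat_iso_vcomp:
  assumes \<alpha>: "is_nat_iso C D S T \<alpha>" and \<beta>: "is_nat_iso C D T U \<beta>"
  shows "is_nat_iso C D S U (\<lambda>x. cmp D (\<beta> x) (\<alpha> x))"
proof -
  have S: "is_functor C D S" and T: "is_functor C D T" and U: "is_functor C D U"
    and D: "is_category D"
    and \<alpha>x: "\<And>x. x \<in> ob C \<Longrightarrow> hom_arr D (\<alpha> x) (fo S x) (fo T x) \<and> is_iso D (\<alpha> x)"
    and \<beta>x: "\<And>x. x \<in> ob C \<Longrightarrow> hom_arr D (\<beta> x) (fo T x) (fo U x) \<and> is_iso D (\<beta> x)"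
    and \<alpha>_nat: "\<And>u. u \<in> ar C \<Longrightarrow> cmp D (\<alpha> (cd C u)) (fa S u) = cmp D (fa T u) (\<alpha> (dm C u))"
    and \<beta>_nat: "\<And>u. u \<in> ar C \<Longrightarrow> cmp D (\<beta> (cd C u)) (fa T u) = cmp D (fa U u) (\<beta> (dm C u))"
    using \<alpha> \<beta> unfolding is_nat_iso_def is_nat_trans_def is_functor_def by auto
  have "cmp D (cmp D (\<beta> (cd C u)) (\<alpha> (cd C u))) (fa S u)
      = cmp D (fa U u) (cmp D (\<beta> (dm C u)) (\<alpha> (dm C u)))" if u: "u \<in> ar C" for u
  proof -
    have ob: "dm C u \<in> ob C" "cd C u \<in> ob C"
      using u S unfolding is_functor_def is_category_def by auto
    have Su: "hom_arr D (fa S u) (fo S (dm C u)) (fo S (cd C u))"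
      and Tu: "hom_arr D (fa T u) (fo T (dm C u)) (fo T (cd C u))"
      and Uu: "hom_arr D (fa U u) (fo U (dm C u)) (fo U (cd C u))"
      using u S T U unfolding is_functor_def by auto
    have "cmp D (cmp D (\<beta> (cd C u)) (\<alpha> (cd C u))) (fa S u)
        = cmp D (\<beta> (cd C u)) (cmp D (fa T u) (\<alpha> (dm C u)))"
      using cmp_assoc[OF D Su conjunct1[OF \<alpha>x] conjunct1[OF \<beta>x]] ob \<alpha>_nat[OF u] by simp
    also have "\<dots> = cmp D (cmp D (fa U u) (\<beta> (dm C u))) (\<alpha> (dm C u))"
      using cmp_assoc[OF D conjunct1[OF \<alpha>x] Tu conjunct1[OF \<beta>x]] ob \<beta>_nat[OF u] by simp
    also have "\<dots> = cmp D (fa U u) (cmp D (\<beta> (dm C u)) (\<alpha> (dm C u)))"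
      using cmp_assoc[OF D conjunct1[OF \<alpha>x] conjunct1[OF \<beta>x] Uu] ob by simp
    finally show ?thesis .
  qed
  moreover have "hom_arr D (cmp D (\<beta> x) (\<alpha> x)) (fo S x) (fo U x)" if "x \<in> ob C" for x
    using hom_arr_cmp[OF D] \<alpha>x[OF that] \<beta>x[OF that] by blast
  moreover have "is_iso D (cmp D (\<beta> x) (\<alpha> x))" if "x \<in> ob C" for x
    using is_iso_cmp[OF D] \<alpha>x[OF that] \<beta>x[OF that] by blast
  ultimately show ?thesis
    using S U unfolding is_nat_iso_def is_nat_trans_def by simp
qed

definition open_functor :: "('l,'la) cat \<Rightarrow> ('i,'ia) cat \<Rightarrow> ('l,'la,'i,'ia) ftor \<Rightarrow> bool" where
  "open_functor L I f \<longleftrightarrow> is_functor L I f \<and> fo f ` ob L = ob I \<and>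
     (\<forall>l\<in>ob L. \<forall>b\<in>ar I. dm I b = fo f l \<longrightarrow> (\<exists>\<phi>\<in>ar L. dm L \<phi> = l \<and> fa f \<phi> = b))"

lemma diag_open_iff:
  "diag_open K L H I F f \<alpha> \<longleftrightarrow>
     diag_morphism K L H I F f \<alpha> \<and> open_functor L I f \<and> is_nat_iso L K H (fcomp F f) \<alpha>"
  unfolding diag_open_def diag_morphism_def open_functor_def by auto

lemma open_functor_lift_arr:
  assumes "open_functor L I f" and "l \<in> ob L" and "\<phi> \<in> ar I" and "dm I \<phi> = fo f l"
  obtains u where "u \<in> ar L" "dm L u = l" "fa f u = \<phi>" "cd I \<phi> = fo f (cd L u)"
  using assms unfolding open_functor_def is_functor_def hom_arr_def by metis

lemma bisimilar_if_nat_iso_open_functors: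
  assumes f: "open_functor L I f" and g: "open_functor L J g"
    and \<theta>: "is_nat_iso L K (fcomp F f) (fcomp G g) \<theta>"
  shows "bisimilar K I F J G"
proof -
  define R where "R = {(fo f l, \<theta> l, fo g l) | l. l \<in> ob L}"
  have f_hom: "\<And>u. u \<in> ar L \<Longrightarrow> hom_arr I (fa f u) (fo f (dm L u)) (fo f (cd L u))"
    and g_hom: "\<And>u. u \<in> ar L \<Longrightarrow> hom_arr J (fa g u) (fo g (dm L u)) (fo g (cd L u))"
    and f_surj: "fo f ` ob L = ob I" and g_surj: "fo g ` ob L = ob J"
    and f_ob: "\<And>l. l \<in> ob L \<Longrightarrow> fo f l \<in> ob I" and g_ob: "\<And>l. l \<in> ob L \<Longrightarrow> fo g l \<in> ob J"
    and cd_ob: "\<And>u. u \<in> ar L \<Longrightarrow> cd L u \<in> ob L"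
    using f g unfolding open_functor_def is_functor_def is_category_def by auto
  have \<theta>_ob: "\<And>l. l \<in> ob L \<Longrightarrow> hom_arr K (\<theta> l) (fo F (fo f l)) (fo G (fo g l)) \<and> is_iso K (\<theta> l)"
    and \<theta>_nat: "\<And>u. u \<in> ar L \<Longrightarrow>
      cmp K (\<theta> (cd L u)) (fa F (fa f u)) = cmp K (fa G (fa g u)) (\<theta> (dm L u))"
    using \<theta> unfolding is_nat_iso_def is_nat_trans_def fcomp_def by auto
  have R_cases: "\<exists>l\<in>ob L. i = fo f l \<and> \<eta> = \<theta> l \<and> j = fo g l" if "(i, \<eta>, j) \<in> R" for i \<eta> j
    using that unfolding R_def by blast
  have R_memI: "(fo f l, \<theta> l, fo g l) \<in> R" if "l \<in> ob L" for l
    using that unfolding R_def by blast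
  have zig: "\<exists>\<eta>' j' \<psi>. (cd I \<phi>, \<eta>', j') \<in> R \<and> hom_arr J \<psi> j j' \<and>
                 cmp K \<eta>' (fa F \<phi>) = cmp K (fa G \<psi>) \<eta>"
    if mem: "(i, \<eta>, j) \<in> R" and \<phi>: "\<phi> \<in> ar I" "dm I \<phi> = i" for i \<eta> j \<phi>
  proof -
    obtain l where l: "l \<in> ob L" "i = fo f l" "\<eta> = \<theta> l" "j = fo g l"
      using R_cases[OF mem] by blast
    then obtain u where u: "u \<in> ar L" "dm L u = l" "fa f u = \<phi>" "cd I \<phi> = fo f (cd L u)"
      using open_functor_lift_arr[OF f] \<phi> by blast
    then show ?thesis
      using R_memI[OF cd_ob[OF u(1)]] g_hom[OF u(1)] \<theta>_nat[OF u(1)] u l by auto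
  qed
  have zag: "\<exists>i' \<eta>' \<phi>. (i', \<eta>', cd J \<psi>) \<in> R \<and> hom_arr I \<phi> i i' \<and>
                 cmp K \<eta>' (fa F \<phi>) = cmp K (fa G \<psi>) \<eta>"
    if mem: "(i, \<eta>, j) \<in> R" and \<psi>: "\<psi> \<in> ar J" "dm J \<psi> = j" for i \<eta> j \<psi>
  proof -
    obtain l where l: "l \<in> ob L" "i = fo f l" "\<eta> = \<theta> l" "j = fo g l"
      using R_cases[OF mem] by blast
    then obtain u where u: "u \<in> ar L" "dm L u = l" "fa g u = \<psi>" "cd J \<psi> = fo g (cd L u)"
      using open_functor_lift_arr[OF g] \<psi> by blast
    then show ?thesis
      using R_memI[OF cd_ob[OF u(1)]] f_hom[OF u(1)] \<theta>_nat[OF u(1)] u l by auto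
  qed
  have "\<exists>\<eta> j. (i, \<eta>, j) \<in> R" if "i \<in> ob I" for i
    using that R_memI unfolding f_surj[symmetric] by blast
  moreover have "\<exists>i \<eta>. (i, \<eta>, j) \<in> R" if "j \<in> ob J" for j
    using that R_memI unfolding g_surj[symmetric] by blast
  moreover have "i \<in> ob I \<and> j \<in> ob J \<and> hom_arr K \<eta> (fo F i) (fo G j) \<and> is_iso K \<eta>"
    if "(i, \<eta>, j) \<in> R" for i \<eta> j
    using R_cases[OF that] \<theta>_ob f_ob g_ob by blast
  ultimately show ?thesis
    unfolding bisimilar_def using zig zag by (intro exI[of _ R] conjI) auto
qed

lemma bisimilar_if_open_span:
  assumes "diag_open K L H I F f \<alpha>" and "diag_open K L H J G g \<beta>"
  shows "bisimilar K I F J G"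
proof (rule bisimilar_if_nat_iso_open_functors)
  have "is_nat_iso L K H (fcomp F f) \<alpha>" and "is_nat_iso L K H (fcomp G g) \<beta>"
    using assms by (simp_all add: diag_open_iff)
  then show "is_nat_iso L K (fcomp F f) (fcomp G g) (\<lambda>l. cmp K (\<beta> l) (inv_arr K (\<alpha> l)))"
    by (rule is_nat_iso_vcomp[OF is_nat_iso_inv])
  show "open_functor L I f" "open_functor L J g"
    using assms by (simp_all add: diag_open_iff)
qed

theorem proposition5p5:
  fixes M :: "('o,'a) cat" and W Fib Cof :: "'a set"
    and Ho :: "('ho,'ha) cat" and h :: "('o,'a,'ho,'ha) ftor"
    and I :: "('i,'ia) cat" and F :: "('i,'ia,'o,'a) ftor"
    and J :: "('j,'ja) cat" and G :: "('j,'ja,'o,'a) ftor"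
    and L :: "('l,'la) cat" and H :: "('l,'la,'o,'a) ftor"
    and f :: "('l,'la,'i,'ia) ftor" and \<mu> :: "'l \<Rightarrow> 'a"
    and g :: "('l,'la,'j,'ja) ftor" and \<nu> :: "'l \<Rightarrow> 'a"
  assumes "model_category M W Fib Cof"
    and "is_localization M W Ho h"
    and "is_diagram I M F" and "is_diagram J M G" and "is_diagram L M H"
    and "diag_morphism M L H I F f \<mu>" and "open_up_to_htpy M Ho h L H I F f \<mu>"
    and "diag_morphism M L H J G g \<nu>" and "open_up_to_htpy M Ho h L H J G g \<nu>"
  shows "bisimilar_up_to_htpy M Ho h I F J G"
proof -
  have "diag_open Ho L (fcomp h H) I (fcomp h F) f (\<lambda>l. fa h (\<mu> l))"
    and "diag_open Ho L (fcomp h H) J (fcomp h G) g (\<lambda>l. fa h (\<nu> l))"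
    using assms(7,9) unfolding open_up_to_htpy_def by simp_all
  then show ?thesis
    unfolding bisimilar_up_to_htpy_def by (rule bisimilar_if_open_span)
qed

end
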